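(* Let $q_1$ and $q_2$ be well-formed PIFO trees. If $q_1 \preceq q_2$, then $\mathsf{flush}(q_1) = \mathsf{flush}(q_2)$.
   Context: Fix a set $\mathsf{Pkt}$ of packets and a totally ordered set $\mathsf{Rk}$ of ranks (smaller is more favorable). PIFOs: for a set $S$, a PIFO over $S$ is a finite sequence of pairs $(s,r)\in S\times\mathsf{Rk}$ in insertion order; $\mathsf{PIFO}(S)$ is the set of these. $\mathsf{push}_{\mathsf{PIFO}}(p,s,r)$ appends $(s,r)$. $\mathsf{pop}_{\mathsf{PIFO}}(p)$ is undefined if $p$ is empty; otherwise it removes the entry of minimal rank (earliest-inserted among ties) and returns $(s,p')$. $|p|$ is the number of entries, $|p|_s$ the number with element $s$. Topologies: $\mathsf{Topo}$ is the smallest set with $*\in\mathsf{Topo}$ and $\mathsf{Node}(\vec t)\in\mathsf{Topo}$ for $n\in\mathbb{N}$, $\vec t\in\mathsf{Topo}^n$. PIFO trees: $\mathsf{Leaf}(p)\in\mathsf{PIFOTree}( * )$ for $p\in\mathsf{PIFO}(\mathsf{Pkt})$; $\mathsf{Internal}(\vec q,p)\in\mathsf{PIFOTree}(\mathsf{Node}(\vec t))$ whenever $\vec t\in\mathsf{Topo}^n$, $p\in\mathsf{PIFO}(\{1,\dots,n\})$, $\vec q[i]\in\mathsf{PIFOTree}(\vec t[i])$. $\vec q[q'/i]$ replaces the $i$-th entry by $q'$. pop (partial): $\mathsf{pop}(\mathsf{Leaf}(p))=(pkt,\mathsf{Leaf}(p'))$ if $\mathsf{pop}_{\mathsf{PIFO}}(p)=(pkt,p')$;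 $\mathsf{pop}(\mathsf{Internal}(\vec q,p))=(pkt,\mathsf{Internal}(\vec q[q'/i],p'))$ if $\mathsf{pop}_{\mathsf{PIFO}}(p)=(i,p')$ and $\mathsf{pop}(\vec q[i])=(pkt,q')$; undefined otherwise. Paths: $\mathsf{Path}( * )=\mathsf{Rk}$; $\mathsf{Path}(\mathsf{Node}(\vec t))$ consists of $(i,r)::pt$ with $1\le i\le n$, $r\in\mathsf{Rk}$, $pt\in\mathsf{Path}(\vec t[i])$. push: $\mathsf{push}(\mathsf{Leaf}(p),pkt,r)=\mathsf{Leaf}(\mathsf{push}_{\mathsf{PIFO}}(p,pkt,r))$; $\mathsf{push}(\mathsf{Internal}(\vec q,p),pkt,(i,r)::pt)=\mathsf{Internal}(\vec q[\mathsf{push}(\vec q[i],pkt,pt)/i],\mathsf{push}_{\mathsf{PIFO}}(p,i,r))$. Size: $|\mathsf{Leaf}(p)|=|p|$, $|\mathsf{Internal}(\vec q,p)|=\sum_i|\vec q[i]|$. Well-formedness: $\vdash\mathsf{Leaf}(p)$ always; $\vdash\mathsf{Internal}(\vec q,p)$ iff for all $i$, $\vdash\vec q[i]$ and $|p|_i=|\vec q[i]|$. Flush: for well-formed $q$, by induction on $|q|$: $\mathsf{flush}(q)=\epsilon$ (empty word) if $|q|=0$, and $\mathsf{flush}(q)=\mathsf{flush}(q')\cdot pkt$ if $|q|>0$ and $\mathsf{pop}(q)=(pkt,q')$. Simulation: for $q_1\in\mathsf{PIFOTree}(t_1)$, $q_2\in\mathsf{PIFOTree}(t_2)$, a relation $R\subseteq\mathsf{PIFOTree}(t_1)\times\mathsf{PIFOTree}(t_2)$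 is a simulation if for all $pkt$ and $u_1\mathrel{R}u_2$: (1) if $\mathsf{pop}(u_1)$ is undefined so is $\mathsf{pop}(u_2)$; (2) if $\mathsf{pop}(u_1)=(pkt,u_1')$ then $\mathsf{pop}(u_2)=(pkt,u_2')$ with $u_1'\mathrel{R}u_2'$; (3) for every $pt_1\in\mathsf{Path}(t_1)$ there is $pt_2\in\mathsf{Path}(t_2)$ with $\mathsf{push}(u_1,pkt,pt_1)\mathrel{R}\mathsf{push}(u_2,pkt,pt_2)$. $q_1\preceq q_2$ means some simulation relates $q_1$ and $q_2$. *)

theory Defs
  imports Main
begin

text \<open>A PIFO over S with ranks in 'r is a list of (element, rank) pairs in insertion order.\<close>
type_synonym ('s, 'r) pifo = "('s \<times> 'r) list"

definition pifo_push :: "('s, 'r) pifo \<Rightarrow> 's \<Rightarrow> 'r \<Rightarrow> ('s, 'r) pifo" where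
  "pifo_push p s r = p @ [(s, r)]"

definition pifo_pop :: "('s, 'r::linorder) pifo \<Rightarrow> ('s \<times> ('s, 'r) pifo) option" where
  "pifo_pop p =
     (if p = [] then None
      else (let m = Min (snd ` set p);
                k = (LEAST i. i < length p \<and> snd (p ! i) = m)
            in Some (fst (p ! k), take k p @ drop (Suc k) p)))"

definition pifo_count :: "('s, 'r) pifo \<Rightarrow> 's \<Rightarrow> nat" where
  "pifo_count p s = length (filter (\<lambda>e. fst e = s) p)"

datatype topo = Star | Node "topo list"

text \<open>Children are indexed 1..n as in the paper; child i is stored at list position i-1.\<close>
datatype ('p, 'r) ptree = Leaf "('p, 'r) pifo" | Internal "('p, 'r) ptree list" "(nat, 'r) pifo"

fun has_topo :: "('p, 'r) ptree \<Rightarrow> topo \<Rightarrow> bool" where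
  "has_topo (Leaf p) Star = True"
| "has_topo (Internal qs p) (Node ts) =
     (list_all2 has_topo qs ts
      \<and> (\<forall>e \<in> set p. 1 \<le> fst e \<and> fst e \<le> length ts))"
| "has_topo _ _ = False"

datatype 'r path = PRk 'r | PStep nat 'r "'r path"

fun is_path :: "topo \<Rightarrow> 'r path \<Rightarrow> bool" where
  "is_path Star (PRk r) = True"
| "is_path (Node ts) (PStep i r pt) = (1 \<le> i \<and> i \<le> length ts \<and> is_path (ts ! (i - 1)) pt)"
| "is_path _ _ = False"

fun push :: "('p, 'r) ptree \<Rightarrow> 'p \<Rightarrow> 'r path \<Rightarrow> ('p, 'r) ptree" where
  "push (Leaf p) pkt (PRk r) = Leaf (pifo_push p pkt r)"
| "push (Internal qs p) pkt (PStep i r pt) =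
     Internal (qs[i - 1 := push (qs ! (i - 1)) pkt pt]) (pifo_push p i r)"
| "push q _ _ = q" \<comment> \<open>ill-typed case, never used\<close>

function pop :: "('p, 'r::linorder) ptree \<Rightarrow> ('p \<times> ('p, 'r) ptree) option" where
  "pop (Leaf p) = (case pifo_pop p of None \<Rightarrow> None | Some (pkt, p') \<Rightarrow> Some (pkt, Leaf p'))"
| "pop (Internal qs p) =
     (case pifo_pop p of None \<Rightarrow> None
      | Some (i, p') \<Rightarrow>
          (if 1 \<le> i \<and> i \<le> length qs then
             (case pop (qs ! (i - 1)) of None \<Rightarrow> None
              | Some (pkt, q') \<Rightarrow> Some (pkt, Internal (qs[i - 1 := q']) p'))
           else None))"
  by pat_completeness auto
termination
proof (relation "measure size")
  fix qs :: "('p, 'r) ptree list" and p :: "(nat, 'r) pifo" and x y i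
  assume "1 \<le> i \<and> i \<le> length qs"
  then have "qs ! (i - 1) \<in> set qs" by (intro nth_mem) linarith
  then show "(qs ! (i - 1), Internal qs p) \<in> measure size"
    using size_list_estimation'[of _ qs "size (qs ! (i - 1))" size] by (simp add: less_Suc_eq_le trans_le_add1)
qed simp

fun tsize :: "('p, 'r) ptree \<Rightarrow> nat" where
  "tsize (Leaf p) = length p"
| "tsize (Internal qs p) = sum_list (map tsize qs)"

fun wf_tree :: "('p, 'r) ptree \<Rightarrow> bool" where
  "wf_tree (Leaf p) = True"
| "wf_tree (Internal qs p) =
     (list_all wf_tree qs \<and> (\<forall>i < length qs. pifo_count p (Suc i) = tsize (qs ! i)))"

text \<open>flush, defined (for well-formed q) by recursion on |q|: flush q = flush q' . pkt
  where pop q = (pkt, q'). We use |q| as fuel; for well-formed q each pop decreases |q| by one.\<close>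
fun flush_fuel :: "nat \<Rightarrow> ('p, 'r::linorder) ptree \<Rightarrow> 'p list" where
  "flush_fuel 0 q = []"
| "flush_fuel (Suc n) q = (case pop q of None \<Rightarrow> [] | Some (pkt, q') \<Rightarrow> flush_fuel n q' @ [pkt])"

definition flush :: "('p, 'r::linorder) ptree \<Rightarrow> 'p list" where
  "flush q = flush_fuel (tsize q) q"

definition simulation :: "topo \<Rightarrow> topo \<Rightarrow> (('p, 'r::linorder) ptree \<Rightarrow> ('p, 'r) ptree \<Rightarrow> bool) \<Rightarrow> bool" where
  "simulation t1 t2 R \<longleftrightarrow>
     (\<forall>u1 u2. R u1 u2 \<longrightarrow> has_topo u1 t1 \<and> has_topo u2 t2) \<and>
     (\<forall>u1 u2. R u1 u2 \<longrightarrow>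
        (pop u1 = None \<longrightarrow> pop u2 = None) \<and>
        (\<forall>pkt u1'. pop u1 = Some (pkt, u1') \<longrightarrow>
            (\<exists>u2'. pop u2 = Some (pkt, u2') \<and> R u1' u2')) \<and>
        (\<forall>pkt pt1. is_path t1 pt1 \<longrightarrow>
            (\<exists>pt2. is_path t2 pt2 \<and> R (push u1 pkt pt1) (push u2 pkt pt2))))"

definition simulated_by :: "topo \<Rightarrow> topo \<Rightarrow> ('p, 'r::linorder) ptree \<Rightarrow> ('p, 'r) ptree \<Rightarrow> bool" where
  "simulated_by t1 t2 q1 q2 \<longleftrightarrow> (\<exists>R. simulation t1 t2 R \<and> R q1 q2)"

end

theory Submission
  imports Defs
begin

text \<open>Every successful pop removes exactly one packet, and on a well-formed tree it yields a
  well-formed tree; hence a well-formed tree of size n is flushed by exactly n pops, and extra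
  fuel changes nothing. A simulation matches pops one for one and packet for packet, so two
  related trees give the same output under every amount of fuel.\<close>

lemma pifo_pop_SomeE:
  assumes "pifo_pop p = Some (s, p')"
  obtains k where "k < length p" "s = fst (p ! k)" "p' = take k p @ drop (Suc k) p"
proof -
  have "p \<noteq> []" using assms by (auto simp: pifo_pop_def)
  define m where "m = Min (snd ` set p)"
  define k where "k = (LEAST i. i < length p \<and> snd (p ! i) = m)"
  have "m \<in> snd ` set p" unfolding m_def using \<open>p \<noteq> []\<close> by (intro Min_in) auto
  then obtain i where "i < length p" "snd (p ! i) = m" by (auto simp: in_set_conv_nth)
  then have "k < length p" unfolding k_def by (metis (mono_tags, lifting) LeastI)
  moreover have "pifo_pop p = Some (fst (p ! k), take k p @ drop (Suc k) p)"
    using \<open>p \<noteq> []\<close> unfolding pifo_pop_def Let_def m_def[symmetric] k_def[symmetric] by simp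
  ultimately show thesis using assms that by auto
qed

lemma pifo_count_remove_nth:
  assumes "k < length p"
  shows "pifo_count p x = pifo_count (take k p @ drop (Suc k) p) x + (if fst (p ! k) = x then 1 else 0)"
proof -
  have "p = take k p @ p ! k # drop (Suc k) p" using assms by (simp add: id_take_nth_drop)
  then have "pifo_count p x = pifo_count (take k p @ p ! k # drop (Suc k) p) x" by simp
  then show ?thesis by (simp add: pifo_count_def)
qed

lemma tsize_pop: "pop q = Some (pkt, q') \<Longrightarrow> tsize q = Suc (tsize q')"
proof (induction q arbitrary: pkt q' rule: pop.induct)
  case (1 p)
  then obtain p' where "pifo_pop p = Some (pkt, p')" "q' = Leaf p'"
    by (auto split: option.splits)
  then show ?case by (auto elim: pifo_pop_SomeE)
next
  case (2 qs p)
  then obtain i p' c' where pop_p: "pifo_pop p = Some (i, p')"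
    and i: "1 \<le> i \<and> i \<le> length qs" and pop_child: "pop (qs ! (i - 1)) = Some (pkt, c')"
    and q': "q' = Internal (qs[i - 1 := c']) p'"
    by (auto split: option.splits if_splits)
  have child: "tsize (qs ! (i - 1)) = Suc (tsize c')" using "2.IH"[OF pop_p refl i pop_child] .
  have "i - 1 < length qs" using i by arith
  then have "tsize (qs ! (i - 1)) \<le> sum_list (map tsize qs)"
    using elem_le_sum_list[of "i - 1" "map tsize qs"] by simp
  moreover have "tsize q' = sum_list (map tsize qs) + tsize c' - tsize (qs ! (i - 1))"
    using q' \<open>i - 1 < length qs\<close> by (simp add: map_update sum_list_update)
  ultimately show ?case using child by simp
qed

lemma wf_tree_pop: "pop q = Some (pkt, q') \<Longrightarrow> wf_tree q \<Longrightarrow> wf_tree q'"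
proof (induction q arbitrary: pkt q' rule: pop.induct)
  case (1 p)
  then show ?case by (auto split: option.splits)
next
  case (2 qs p)
  then obtain i p' c' where pop_p: "pifo_pop p = Some (i, p')"
    and i: "1 \<le> i \<and> i \<le> length qs" and pop_child: "pop (qs ! (i - 1)) = Some (pkt, c')"
    and q': "q' = Internal (qs[i - 1 := c']) p'"
    by (auto split: option.splits if_splits)
  have "i - 1 < length qs" using i by arith
  then have "wf_tree (qs ! (i - 1))" using "2.prems"(2) by (simp add: list_all_iff)
  then have "wf_tree c'" using "2.IH"[OF pop_p refl i pop_child] by blast
  then have "list_all wf_tree (qs[i - 1 := c'])"
    using "2.prems"(2) set_update_subset_insert by (fastforce simp: list_all_iff)
  moreover have "pifo_count p' (Suc j) = tsize (qs[i - 1 := c'] ! j)" if "j < length qs" for j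
  proof -
    obtain k where k: "k < length p" "i = fst (p ! k)" "p' = take k p @ drop (Suc k) p"
      using pop_p by (rule pifo_pop_SomeE)
    have "pifo_count p (Suc j) = tsize (qs ! j)" using "2.prems"(2) that by simp
    moreover have "tsize (qs ! (i - 1)) = Suc (tsize c')" using pop_child by (rule tsize_pop)
    moreover have "Suc j = i \<longleftrightarrow> j = i - 1" using i by arith
    ultimately show ?thesis
      using pifo_count_remove_nth[OF k(1), of "Suc j"] k(2,3) that by auto
  qed
  ultimately show ?case using q' by simp
qed

lemma flush_fuel_eq_flush: "wf_tree q \<Longrightarrow> tsize q \<le> n \<Longrightarrow> flush_fuel n q = flush q"
proof (induction n arbitrary: q)
  case 0
  then show ?case by (simp add: flush_def)
next
  case (Suc n)
  show ?case
  proof (cases "pop q")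
    case None
    then show ?thesis by (cases "tsize q") (simp_all add: flush_def)
  next
    case (Some a)
    then obtain pkt q' where pop_q: "pop q = Some (pkt, q')" by (cases a) auto
    have size: "tsize q = Suc (tsize q')" using pop_q by (rule tsize_pop)
    have "flush_fuel n q' = flush q'"
      using Suc.IH wf_tree_pop[OF pop_q Suc.prems(1)] Suc.prems(2) size by simp
    then show ?thesis using pop_q size by (simp add: flush_def)
  qed
qed

lemma simulation_flush_fuel_eq:
  assumes "simulation t1 t2 R" and "R u1 u2"
  shows "flush_fuel n u1 = flush_fuel n u2"
  using assms(2)
proof (induction n arbitrary: u1 u2)
  case 0
  then show ?case by simp
next
  case (Suc n)
  show ?case
  proof (cases "pop u1")
    case None
    then have "pop u2 = None" using assms(1) Suc.prems unfolding simulation_def by blast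
    then show ?thesis using None by simp
  next
    case (Some a)
    then obtain pkt u1' where pop_u1: "pop u1 = Some (pkt, u1')" by (cases a) auto
    then obtain u2' where "pop u2 = Some (pkt, u2')" "R u1' u2'"
      using assms(1) Suc.prems unfolding simulation_def by blast
    then show ?thesis using pop_u1 Suc.IH by simp
  qed
qed

theorem lemma4p6:
  fixes q1 q2 :: "('p, 'r::linorder) ptree" and t1 t2 :: topo
  assumes "has_topo q1 t1" and "has_topo q2 t2"
    and "wf_tree q1" and "wf_tree q2"
    and "simulated_by t1 t2 q1 q2"
  shows "flush q1 = flush q2"
proof -
  obtain R where R: "simulation t1 t2 R" "R q1 q2"
    using assms(5) unfolding simulated_by_def by blast
  define n where "n = max (tsize q1) (tsize q2)"
  have "flush q1 = flush_fuel n q1" using flush_fuel_eq_flush[OF assms(3)] by (simp add: n_def)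
  also have "\<dots> = flush_fuel n q2" using R by (rule simulation_flush_fuel_eq)
  also have "\<dots> = flush q2" using flush_fuel_eq_flush[OF assms(4)] by (simp add: n_def)
  finally show ?thesis .
qed

end
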